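(* Let $n\in\mathbb{N}_0$ and $p\in\mathbb{N}_0$ with $p\ge n$. Let $\psi_{i,n}$ denote the $n$-th primitive of the Legendre polynomial $L_i$. Then for integers $0\le k\le p$, \[ \int_{-1}^1\psi_{p+k,n}(x)\,\psi_{p-k,n}(x)\,dx= \begin{cases} \displaystyle (-1)^k\frac{2^{n+1}\,n!}{(n+k)!\,(n-k)!}\,\frac{1}{2p+1}\prod_{i=1}^n\frac{2i-1}{(2p+1)^2-4i^2}, & k=0,1,\dots,n,\\[2mm] 0, & k=n+1,\dots,p. \end{cases} \]
   Context: $L_j$ denotes the Legendre polynomial of degree $j$ on $(-1,1)$, normalized so that $L_j(1)=1$ and $\int_{-1}^1 L_iL_j=\frac{2}{2i+1}\delta_{ij}$. The $n$-th primitive is defined recursively by $\psi_{i,0}:=L_i$ and $\psi_{i,n}(x):=\int_{-1}^x\psi_{i,n-1}(\zeta)\,d\zeta$ for $n\ge1$. *)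

theory Defs
  imports "HOL-Analysis.Analysis"
begin

text \<open>Legendre polynomials on (-1,1), normalized by L_j(1) = 1, defined via
  Bonnet's three-term recurrence (n+1) L_{n+1} = (2n+1) x L_n - n L_{n-1}.\<close>
fun legendre :: "nat \<Rightarrow> real \<Rightarrow> real" where
  "legendre 0 x = 1"
| "legendre (Suc 0) x = x"
| "legendre (Suc (Suc n)) x =
     ((2 * real n + 3) * x * legendre (Suc n) x - (real n + 1) * legendre n x) / (real n + 2)"

fun legendre_prim :: "nat \<Rightarrow> nat \<Rightarrow> real \<Rightarrow> real" where
  "legendre_prim i 0 x = legendre i x"
| "legendre_prim i (Suc n) x = integral {-1..x} (legendre_prim i n)"

end

theory Submission
  imports Defs "HOL-Computational_Algebra.Polynomial"
begin

text \<open>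
  The primitives \<open>\<psi>\<^sub>i\<^sub>,\<^sub>n\<close> are polynomials: integrating \<open>L\<^sub>i = (L'\<^sub>i\<^sub>+\<^sub>1 - L'\<^sub>i\<^sub>-\<^sub>1) / (2i + 1)\<close> gives
  \<open>\<psi>\<^sub>i\<^sub>,\<^sub>n\<^sub>+\<^sub>1 = (\<psi>\<^sub>i\<^sub>+\<^sub>1\<^sub>,\<^sub>n - \<psi>\<^sub>i\<^sub>-\<^sub>1\<^sub>,\<^sub>n) / (2i + 1)\<close> for \<open>i \<ge> 1\<close>, while \<open>\<psi>\<^sub>0\<^sub>,\<^sub>n = (1 + x)\<^sup>n / n!\<close>.
  Expanding both factors of \<open>\<psi>\<^sub>p\<^sub>+\<^sub>k\<^sub>,\<^sub>n\<^sub>+\<^sub>1 \<psi>\<^sub>p\<^sub>-\<^sub>k\<^sub>,\<^sub>n\<^sub>+\<^sub>1\<close> in this way expresses its integral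
  through four integrals of level \<open>n\<close>, with parameters \<open>(p \<plusminus> 1, k)\<close> and \<open>(p, k \<plusminus> 1)\<close>.
  The closed form satisfies the same recurrence (a rational identity in \<open>2p + 1\<close>, \<open>n\<close> and
  \<open>k\<close>) and, at \<open>n = 0\<close>, the orthogonality relations of the Legendre polynomials, so induction
  on \<open>n\<close> proves the theorem. In the boundary case \<open>k = p\<close> the factor
  \<open>\<psi>\<^sub>0\<^sub>,\<^sub>n\<^sub>+\<^sub>1 = \<psi>\<^sub>0\<^sub>,\<^sub>n + \<psi>\<^sub>1\<^sub>,\<^sub>n\<close> appears instead; the products with \<open>\<psi>\<^sub>0\<^sub>,\<^sub>n\<close> vanish because
  \<open>\<psi>\<^sub>i\<^sub>,\<^sub>m\<close> is orthogonal to all polynomials of degree less than \<open>i - m\<close> (integrate by parts,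
  using that \<open>\<psi>\<^sub>i\<^sub>,\<^sub>j\<close> vanishes at \<open>\<plusminus>1\<close> for \<open>1 \<le> j \<le> i\<close>).
\<close>

section \<open>Legendre polynomials\<close>

fun legendre_poly :: "nat \<Rightarrow> real poly" where
  "legendre_poly 0 = 1"
| "legendre_poly (Suc 0) = [:0, 1:]"
| "legendre_poly (Suc (Suc n)) = smult (1 / (real n + 2))
     (smult (2 * real n + 3) ([:0, 1:] * legendre_poly (Suc n)) - smult (real n + 1) (legendre_poly n))"

lemma poly_legendre_poly: "poly (legendre_poly n) x = legendre n x"
  by (induction n rule: legendre_poly.induct) (simp_all add: field_simps)

lemma legendre_poly_recurrence:
  "smult (real m + 1) (legendre_poly (Suc m)) =
     smult (2 * real m + 1) ([:0, 1:] * legendre_poly m) - smult (real m) (legendre_poly (m - 1))"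
proof (cases m)
  case (Suc m')
  have "real m' + 2 \<noteq> 0" by simp
  with Suc show ?thesis by (simp add: algebra_simps)
qed simp

lemma poly_legendre_poly_recurrence:
  "(real m + 2) * poly (legendre_poly (Suc (Suc m))) x =
     (2 * real m + 3) * x * poly (legendre_poly (Suc m)) x - (real m + 1) * poly (legendre_poly m) x"
  by (simp add: field_simps)

declare legendre_poly.simps(3) [simp del]

lemma degree_legendre_poly_le: "degree (legendre_poly n) \<le> n"
proof (induction n rule: legendre_poly.induct)
  case (3 n)
  have "degree ([:0, 1:] * legendre_poly (Suc n)) \<le> Suc (Suc n)"
    using degree_mult_le[of "[:0, 1:]" "legendre_poly (Suc n)"] 3 by simp
  moreover have "degree (legendre_poly n) \<le> Suc (Suc n)"
    using 3 by simp
  ultimately show ?case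
    unfolding legendre_poly.simps(3)
    by (intro order.trans[OF degree_smult_le] degree_diff_le order.trans[OF degree_smult_le])
qed simp_all

lemma legendre_poly_at_1: "poly (legendre_poly n) 1 = 1"
  by (induction n rule: legendre_poly.induct) (simp_all add: legendre_poly.simps(3) field_simps)

lemma legendre_poly_at_neg1: "poly (legendre_poly n) (-1) = (-1) ^ n"
  by (induction n rule: legendre_poly.induct) (simp_all add: legendre_poly.simps(3) field_simps)

lemma x_pderiv_legendre_poly_imp_pderiv_Suc_Suc:
  assumes "x * poly (pderiv (legendre_poly (Suc m))) x =
             poly (pderiv (legendre_poly m)) x + (real m + 1) * poly (legendre_poly (Suc m)) x"
  shows "poly (pderiv (legendre_poly (Suc (Suc m)))) x =
           (2 * real m + 3) * poly (legendre_poly (Suc m)) x + poly (pderiv (legendre_poly m)) x"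
proof -
  have "pderiv (legendre_poly (Suc (Suc m))) = smult (1 / (real m + 2))
          (smult (2 * real m + 3) (legendre_poly (Suc m) + [:0, 1:] * pderiv (legendre_poly (Suc m)))
             - smult (real m + 1) (pderiv (legendre_poly m)))"
    by (simp add: legendre_poly.simps(3) pderiv_mult pderiv_smult pderiv_diff pderiv_pCons smult_add_right)
  with assms show ?thesis
    by (simp add: field_simps)
qed

lemma x_pderiv_legendre_poly:
  "x * poly (pderiv (legendre_poly (Suc m))) x =
     poly (pderiv (legendre_poly m)) x + (real m + 1) * poly (legendre_poly (Suc m)) x"
proof (induction m rule: legendre_poly.induct)
  case (3 m)
  let ?P = "\<lambda>j. poly (legendre_poly j) x" and ?D = "\<lambda>j. poly (pderiv (legendre_poly j)) x"
  have "?D (Suc (Suc (Suc m))) = (2 * real m + 5) * ?P (Suc (Suc m)) + ?D (Suc m)"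
    using x_pderiv_legendre_poly_imp_pderiv_Suc_Suc[OF "3.IH"(1)] by (simp add: algebra_simps)
  moreover have "?D (Suc (Suc m)) = (2 * real m + 3) * ?P (Suc m) + ?D m"
    using x_pderiv_legendre_poly_imp_pderiv_Suc_Suc[OF "3.IH"(2)] .
  moreover note "3.IH"(2) poly_legendre_poly_recurrence[of "Suc m" x]
  ultimately show ?case
    by (simp add: algebra_simps)
qed (simp_all add: legendre_poly.simps(3) pderiv_pCons field_simps)

lemma pderiv_legendre_poly_Suc_Suc:
  "pderiv (legendre_poly (Suc (Suc m))) =
     smult (2 * real m + 3) (legendre_poly (Suc m)) + pderiv (legendre_poly m)"
  by (subst poly_eq_poly_eq_iff[symmetric])
     (simp add: fun_eq_iff x_pderiv_legendre_poly_imp_pderiv_Suc_Suc x_pderiv_legendre_poly)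

section \<open>Primitives of Legendre polynomials\<close>

fun legendre_prim_poly :: "nat \<Rightarrow> nat \<Rightarrow> real poly" where
  "legendre_prim_poly i 0 = legendre_poly i"
| "legendre_prim_poly 0 (Suc n) = smult (1 / fact (Suc n)) ([:1, 1:] ^ Suc n)"
| "legendre_prim_poly (Suc i) (Suc n) =
     smult (1 / (2 * real i + 3)) (legendre_prim_poly (Suc (Suc i)) n - legendre_prim_poly i n)"

declare legendre_prim_poly.simps(3) [simp del]

lemma pderiv_legendre_prim_poly: "pderiv (legendre_prim_poly i (Suc n)) = legendre_prim_poly i n"
proof (induction n arbitrary: i)
  case 0
  show ?case
  proof (cases i)
    case (Suc j)
    then show ?thesis
      by (simp add: legendre_prim_poly.simps(3) pderiv_diff pderiv_smult pderiv_legendre_poly_Suc_Suc)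
  qed (simp add: pderiv_pCons)
next
  case (Suc n)
  show ?case
  proof (cases i)
    case (Suc j)
    show ?thesis
      unfolding Suc legendre_prim_poly.simps(3)[of j "Suc n"] legendre_prim_poly.simps(3)[of j n]
        pderiv_smult pderiv_diff Suc.IH ..
  next
    case 0
    show ?thesis
      unfolding 0 legendre_prim_poly.simps(2) pderiv_smult pderiv_power_Suc
      by (simp add: pderiv_pCons)
  qed
qed

lemma legendre_prim_poly_at_neg1: "poly (legendre_prim_poly i (Suc n)) (-1) = 0"
proof (induction n arbitrary: i)
  case 0
  then show ?case by (cases i) (simp_all add: legendre_prim_poly.simps(3) legendre_poly_at_neg1)
next
  case (Suc n)
  then show ?case by (cases i) (simp_all add: legendre_prim_poly.simps(3)[of _ "Suc n"])
qed

lemma legendre_prim_poly_at_1: "0 < j \<Longrightarrow> j \<le> i \<Longrightarrow> poly (legendre_prim_poly i j) 1 = 0"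
proof (induction j arbitrary: i)
  case (Suc j)
  then obtain i' where i: "i = Suc i'" by (cases i) auto
  show ?case
  proof (cases j)
    case 0
    then show ?thesis using i by (simp add: legendre_prim_poly.simps(3) legendre_poly_at_1)
  next
    case (Suc j')
    then show ?thesis
      unfolding i legendre_prim_poly.simps(3)[of i' j] using Suc.IH Suc.prems i by simp
  qed
qed simp

lemma poly_eqI_pderiv:
  fixes f g :: "'a :: {idom, ring_char_0} poly"
  assumes "pderiv f = pderiv g" and "poly f a = poly g a"
  shows "f = g"
proof -
  have "degree (f - g) = 0"
    using assms(1) by (simp add: pderiv_diff pderiv_eq_0_iff[symmetric])
  then obtain c where c: "f - g = [:c:]" by (meson degree_eq_zeroE)
  then have "c = 0"
    using assms(2) by (metis diff_self poly_diff poly_pCons mult_zero_right add_0_right)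
  with c show ?thesis by simp
qed

lemma legendre_prim_poly_0_Suc:
  "legendre_prim_poly 0 (Suc n) = legendre_prim_poly 0 n + legendre_prim_poly 1 n"
proof (induction n)
  case 0
  then show ?case by (simp add: one_pCons)
next
  case (Suc n)
  show ?case
  proof (rule poly_eqI_pderiv[where a = "-1"])
    show "pderiv (legendre_prim_poly 0 (Suc (Suc n))) =
            pderiv (legendre_prim_poly 0 (Suc n) + legendre_prim_poly 1 (Suc n))"
      unfolding pderiv_add pderiv_legendre_prim_poly using Suc.IH .
  qed (simp only: poly_add legendre_prim_poly_at_neg1)
qed

lemma degree_legendre_prim_poly_0_le: "degree (legendre_prim_poly 0 n) \<le> n"
proof (cases n)
  case (Suc m)
  have "degree ([:1, 1:] ^ Suc m :: real poly) = Suc m"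
    using degree_linear_power[of 1 "Suc m"] by (simp only: one_pCons)
  with Suc show ?thesis by simp
qed simp

lemma legendre_prim_eq_poly: "-1 \<le> x \<Longrightarrow> legendre_prim i n x = poly (legendre_prim_poly i n) x"
proof (induction n arbitrary: x)
  case 0
  then show ?case by (simp add: poly_legendre_poly)
next
  case (Suc n)
  have "legendre_prim i (Suc n) x = integral {-1..x} (poly (legendre_prim_poly i n))"
    unfolding legendre_prim.simps(2) by (rule integral_cong) (simp add: Suc.IH)
  also have "\<dots> = poly (legendre_prim_poly i (Suc n)) x - poly (legendre_prim_poly i (Suc n)) (-1)"
    using Suc.prems poly_DERIV[of "legendre_prim_poly i (Suc n)"]
    by (intro integral_unique fundamental_theorem_of_calculus)
       (auto simp: pderiv_legendre_prim_poly has_real_derivative_iff_has_vector_derivative[symmetric]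
             intro: has_field_derivative_at_within)
  finally show ?case
    by (simp add: legendre_prim_poly_at_neg1)
qed

section \<open>Integrals over \<open>[-1, 1]\<close>\<close>

definition poly_integral :: "real poly \<Rightarrow> real" where
  "poly_integral q = integral {-1..1} (poly q)"

lemma poly_integrable_on_interval: "poly q integrable_on {a..b :: real}"
  by (intro integrable_continuous_interval continuous_intros)

lemma poly_integral_add: "poly_integral (p + q) = poly_integral p + poly_integral q"
  unfolding poly_integral_def poly_add[abs_def]
  by (rule integral_add[OF poly_integrable_on_interval poly_integrable_on_interval])

lemma poly_integral_diff: "poly_integral (p - q) = poly_integral p - poly_integral q"
  unfolding poly_integral_def poly_diff[abs_def]
  by (rule integral_diff[OF poly_integrable_on_interval poly_integrable_on_interval])

lemma poly_integral_smult: "poly_integral (smult c p) = c * poly_integral p"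
  unfolding poly_integral_def poly_smult[abs_def] by (rule integral_mult_right)

lemma poly_integral_0 [simp]: "poly_integral 0 = 0"
  by (simp add: poly_integral_def poly_0[abs_def])

lemma poly_integral_1 [simp]: "poly_integral 1 = 2"
  by (simp add: poly_integral_def poly_1[abs_def])

lemma poly_integral_pderiv: "poly_integral (pderiv q) = poly q 1 - poly q (-1)"
  unfolding poly_integral_def
  using poly_DERIV[of q]
  by (intro integral_unique fundamental_theorem_of_calculus)
     (auto simp: has_real_derivative_iff_has_vector_derivative[symmetric]
           intro: has_field_derivative_at_within)

lemma poly_integral_by_parts:
  "poly_integral (pderiv f * g) =
     poly f 1 * poly g 1 - poly f (-1) * poly g (-1) - poly_integral (f * pderiv g)"
  using poly_integral_pderiv[of "f * g"]
  by (simp add: pderiv_mult poly_integral_add mult.commute[of g])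

lemma poly_integral_legendre_prim_poly_mult_eq_0:
  "degree q + m < i \<Longrightarrow> poly_integral (legendre_prim_poly i m * q) = 0"
proof (induction "degree q" arbitrary: q m rule: less_induct)
  case less
  have "poly_integral (legendre_prim_poly i m * q) =
          - poly_integral (legendre_prim_poly i (Suc m) * pderiv q)"
    using poly_integral_by_parts[of "legendre_prim_poly i (Suc m)" q] less.prems
    by (simp add: pderiv_legendre_prim_poly legendre_prim_poly_at_1 legendre_prim_poly_at_neg1)
  also have "\<dots> = 0"
  proof (cases "degree q = 0")
    case True
    then show ?thesis by (simp add: pderiv_eq_0_iff[symmetric])
  next
    case False
    then show ?thesis
      using less by (simp add: degree_pderiv)
  qed
  finally show ?case .
qed

lemma legendre_poly_orthogonal:
  assumes "i \<noteq> j"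
  shows "poly_integral (legendre_poly i * legendre_poly j) = 0"
proof -
  have "degree (legendre_poly (min i j)) < max i j"
    using degree_legendre_poly_le[of "min i j"] assms by (auto simp: min_def max_def)
  then have "poly_integral (legendre_poly (max i j) * legendre_poly (min i j)) = 0"
    using poly_integral_legendre_prim_poly_mult_eq_0[of "legendre_poly (min i j)" 0 "max i j"]
    by simp
  then show ?thesis
    by (cases "i \<le> j") (simp_all add: max_def min_def mult.commute)
qed

lemma poly_integral_legendre_poly_recurrence:
  "(real m + 1) * poly_integral (legendre_poly (Suc m) * q) =
     (2 * real m + 1) * poly_integral ([:0, 1:] * legendre_poly m * q)
       - real m * poly_integral (legendre_poly (m - 1) * q)"
  using arg_cong[OF legendre_poly_recurrence[of m], of "\<lambda>p. poly_integral (p * q)"]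
  by (simp only: left_diff_distrib mult_smult_left poly_integral_diff poly_integral_smult)

lemma poly_integral_legendre_poly_square:
  "poly_integral (legendre_poly n * legendre_poly n) = 2 / (2 * real n + 1)"
proof (induction n)
  case (Suc m)
  define X where "X = poly_integral ([:0, 1:] * legendre_poly (Suc m) * legendre_poly m)"
  define S where "S = poly_integral (legendre_poly (Suc m) * legendre_poly (Suc m))"
  have S: "(real m + 1) * S = (2 * real m + 1) * X"
    using poly_integral_legendre_poly_recurrence[of m "legendre_poly (Suc m)"]
      legendre_poly_orthogonal[of "m - 1" "Suc m"]
    by (simp add: S_def X_def ac_simps)
  have X: "(real m + 1) * (2 / (2 * real m + 1)) = (2 * real m + 3) * X"
    using poly_integral_legendre_poly_recurrence[of "Suc m" "legendre_poly m"]
      legendre_poly_orthogonal[of "Suc (Suc m)" m] Suc.IH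
    by (simp add: X_def algebra_simps)
  have "(real m + 1) * ((2 * real m + 3) * S) = (2 * real m + 1) * ((2 * real m + 3) * X)"
    by (simp only: S mult.left_commute[of "real m + 1"] mult.left_commute[of "2 * real m + 1"])
  also have "\<dots> = (real m + 1) * 2"
    by (simp only: X[symmetric]) simp
  finally have "(2 * real m + 3) * S = 2"
    by (subst (asm) mult_cancel_left) simp
  then show ?case
    by (simp add: S_def field_simps)
qed simp

lemma poly_integral_diff_mult_diff:
  "poly_integral ((a - b) * (c - d)) =
     poly_integral (a * c) - poly_integral (a * d) - poly_integral (b * c) + poly_integral (b * d)"
  by (simp add: algebra_simps poly_integral_diff poly_integral_add)

lemma poly_integral_legendre_prim_poly_Suc_Suc:
  "(2 * real i + 3) * (2 * real j + 3) *
       poly_integral (legendre_prim_poly (Suc i) (Suc n) * legendre_prim_poly (Suc j) (Suc n)) =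
     poly_integral (legendre_prim_poly (Suc (Suc i)) n * legendre_prim_poly (Suc (Suc j)) n)
     - poly_integral (legendre_prim_poly (Suc (Suc i)) n * legendre_prim_poly j n)
     - poly_integral (legendre_prim_poly i n * legendre_prim_poly (Suc (Suc j)) n)
     + poly_integral (legendre_prim_poly i n * legendre_prim_poly j n)"
  unfolding legendre_prim_poly.simps(3) mult_smult_left mult_smult_right poly_integral_smult
    poly_integral_diff_mult_diff
  by (simp add: add_pos_pos)

lemma poly_integral_legendre_prim_poly_Suc_0:
  "(2 * real i + 3) * poly_integral (legendre_prim_poly (Suc i) (Suc n) * legendre_prim_poly 0 (Suc n)) =
     poly_integral (legendre_prim_poly (Suc (Suc i)) n * legendre_prim_poly 0 n)
     + poly_integral (legendre_prim_poly (Suc (Suc i)) n * legendre_prim_poly 1 n)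
     - poly_integral (legendre_prim_poly i n * legendre_prim_poly 0 n)
     - poly_integral (legendre_prim_poly i n * legendre_prim_poly 1 n)"
  unfolding legendre_prim_poly.simps(3) legendre_prim_poly_0_Suc mult_smult_left poly_integral_smult
    left_diff_distrib distrib_left poly_integral_diff poly_integral_add
  by (simp add: add_pos_pos)

section \<open>The closed form\<close>

definition gram_coeff :: "nat \<Rightarrow> nat \<Rightarrow> real" where
  "gram_coeff n k = (if k \<le> n then 2 ^ (n + 1) * fact n / (fact (n + k) * fact (n - k)) else 0)"

lemma gram_coeff_Suc:
  "2 * (real n + 1) * gram_coeff n k = (real n + 1 + real k) * (real n + 1 - real k) * gram_coeff (Suc n) k"
proof (cases "k \<le> n")
  case True
  define A B a b where "A = (fact (n + k) :: real)" and "B = (fact (n - k) :: real)"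
    and "a = real n + 1 + real k" and "b = real n + 1 - real k"
  have c0: "gram_coeff n k = 2 ^ (n + 1) * fact n / (A * B)"
    using True by (simp add: gram_coeff_def A_def B_def)
  have "Suc n - k = Suc (n - k)"
    using True by simp
  then have c: "gram_coeff (Suc n) k = 2 ^ (n + 2) * ((real n + 1) * fact n) / ((a * A) * (b * B))"
    using True by (simp add: gram_coeff_def A_def B_def a_def b_def of_nat_diff algebra_simps)
  have "A \<noteq> 0" "B \<noteq> 0" "a \<noteq> 0" "b \<noteq> 0"
    using True by (simp_all add: A_def B_def a_def b_def)
  then show ?thesis
    unfolding c c0 a_def[symmetric] b_def[symmetric] by (simp add: field_simps)
next
  case False
  then show ?thesis
    by (cases "k = Suc n") (simp_all add: gram_coeff_def)
qed

lemma gram_coeff_Suc_upper: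
  "2 * (real n + 1) * gram_coeff n (Suc k) = (real n + 1 - real k) * (real n - real k) * gram_coeff (Suc n) k"
proof (cases "Suc k \<le> n")
  case True
  define A B a b where "A = (fact (n + Suc k) :: real)" and "B = (fact (n - Suc k) :: real)"
    and "a = real n + 1 - real k" and "b = real n - real k"
  have c0: "gram_coeff n (Suc k) = 2 ^ (n + 1) * fact n / (A * B)"
    using True by (simp add: gram_coeff_def A_def B_def)
  have "Suc n - k = Suc (Suc (n - Suc k))" "Suc n + k = n + Suc k"
    using True by simp_all
  then have c: "gram_coeff (Suc n) k = 2 ^ (n + 2) * ((real n + 1) * fact n) / (A * (a * b * B))"
    using True by (simp add: gram_coeff_def A_def B_def a_def b_def of_nat_diff algebra_simps)
  have "A \<noteq> 0" "B \<noteq> 0" "a \<noteq> 0" "b \<noteq> 0"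
    using True by (simp_all add: A_def B_def a_def b_def)
  then show ?thesis
    unfolding c c0 a_def[symmetric] b_def[symmetric] by (simp add: field_simps)
next
  case False
  then show ?thesis
    by (cases "k = n") (simp_all add: gram_coeff_def)
qed

lemma gram_coeff_Suc_lower:
  "2 * (real n + 1) * gram_coeff n (if k = 0 then 1 else k - 1) =
     (real n + real k) * (real n + real k + 1) * gram_coeff (Suc n) k"
proof (cases k)
  case 0
  then show ?thesis
    using gram_coeff_Suc_upper[of n 0] by (simp add: algebra_simps)
next
  case (Suc j)
  have "2 * (real n + 1) * gram_coeff n j = (real n + real j + 1) * (real n + real j + 2) * gram_coeff (Suc n) (Suc j)"
  proof (cases "j \<le> n")
    case True
    define A B a b where "A = (fact (n + j) :: real)" and "B = (fact (n - j) :: real)"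
      and "a = real n + real j + 1" and "b = real n + real j + 2"
    have c0: "gram_coeff n j = 2 ^ (n + 1) * fact n / (A * B)"
      using True by (simp add: gram_coeff_def A_def B_def)
    have "Suc n + Suc j = Suc (Suc (n + j))" "Suc n - Suc j = n - j"
      by simp_all
    then have c: "gram_coeff (Suc n) (Suc j) = 2 ^ (n + 2) * ((real n + 1) * fact n) / (b * (a * A) * B)"
      using True by (simp add: gram_coeff_def A_def B_def a_def b_def algebra_simps)
    have "A \<noteq> 0" "B \<noteq> 0" "a \<noteq> 0" "b \<noteq> 0"
      by (simp_all add: A_def B_def a_def b_def)
    then show ?thesis
      unfolding c c0 a_def[symmetric] b_def[symmetric] by (simp add: field_simps)
  qed (simp add: gram_coeff_def)
  with Suc show ?thesis
    by (simp add: algebra_simps)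
qed

definition gram_prod :: "nat \<Rightarrow> nat \<Rightarrow> real" where
  "gram_prod n p = (\<Prod>i = 1..n. (2 * real i - 1) / ((2 * real p + 1)^2 - 4 * (real i)^2))"

lemma odd_neq_even_real: "2 * real a + 1 \<noteq> 2 * real b"
proof
  assume "2 * real a + 1 = 2 * real b"
  then have "2 * a + 1 = 2 * b"
    by linarith
  then show False
    by presburger
qed

lemma gram_prod_Suc:
  fixes x :: real
  assumes "x = 2 * real p + 1"
  shows "gram_prod (Suc n) p = gram_prod n p * (2 * real n + 1) / ((x - 2 * real n - 2) * (x + 2 * real n + 2))"
proof -
  have "(2 * real p + 1)^2 - 4 * (real n + 1)^2 = (x - 2 * real n - 2) * (x + 2 * real n + 2)"
    by (simp add: assms algebra_simps power2_eq_square)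
  then show ?thesis
    by (simp add: gram_prod_def prod.cl_ivl_Suc add.commute)
qed

lemma gram_prod_shift:
  "gram_prod n (Suc p) * (2 * real p + 1) * (2 * real p + 2 * real n + 3) =
     gram_prod n p * (2 * real p + 1 - 2 * real n) * (2 * real p + 3)"
proof (induction n)
  case (Suc n)
  define x a b where "x = 2 * real p + 1" and "a = gram_prod n (Suc p)" and "b = gram_prod n p"
  define u v w z where "u = x - 2 * real n" and "v = x + 2 * real n + 4"
    and "w = x + 2 * real n + 2" and "z = x - 2 * real n - 2"
  have IH: "a * x * w = b * u * (x + 2)"
    using Suc.IH by (simp add: x_def a_def b_def u_def w_def algebra_simps)
  have nz: "u \<noteq> 0" "z \<noteq> 0" "v \<noteq> 0" "w \<noteq> 0"
    using odd_neq_even_real[of p n] odd_neq_even_real[of p "Suc n"]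
    by (auto simp: u_def z_def v_def w_def x_def add_pos_pos)
  have P1: "gram_prod (Suc n) (Suc p) = a * (2 * real n + 1) / (u * v)"
    using gram_prod_Suc[of "x + 2" "Suc p" n] by (simp add: a_def u_def v_def x_def algebra_simps)
  have P0: "gram_prod (Suc n) p = b * (2 * real n + 1) / (z * w)"
    using gram_prod_Suc[OF x_def, of n] by (simp add: b_def w_def z_def algebra_simps)
  have "gram_prod (Suc n) (Suc p) * x * v = (a * x * w) * (2 * real n + 1) / (u * w)"
    unfolding P1 using nz by (simp add: field_simps)
  also have "\<dots> = (b * u * (x + 2)) * (2 * real n + 1) / (u * w)"
    by (simp only: IH)
  also have "\<dots> = gram_prod (Suc n) p * z * (x + 2)"
    unfolding P0 using nz by (simp add: field_simps)
  finally have "gram_prod (Suc n) (Suc p) * x * v = gram_prod (Suc n) p * z * (x + 2)" .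
  then show ?case
    by (simp add: x_def v_def z_def algebra_simps)
qed (simp add: gram_prod_def)

lemma gram_prod_Suc_param:
  fixes x :: real
  assumes "x = 2 * real p + 1"
  shows "gram_prod n (Suc p) / (x + 2) = gram_prod n p * (x - 2 * real n) / (x * (x + 2 * real n + 2))"
proof -
  have "x + 2 \<noteq> 0" "x * (x + 2 * real n + 2) \<noteq> 0"
    using assms by (simp_all add: add_pos_pos)
  moreover have "gram_prod n (Suc p) * (x * (x + 2 * real n + 2)) = gram_prod n p * (x - 2 * real n) * (x + 2)"
    using gram_prod_shift[of n p] by (simp add: assms algebra_simps)
  ultimately show ?thesis
    by (simp add: frac_eq_eq)
qed

lemma gram_prod_pred_param:
  fixes x :: real
  assumes "x = 2 * real p + 1" and "0 < p"
  shows "gram_prod n (p - 1) / (x - 2) = gram_prod n p * (x + 2 * real n) / (x * (x - 2 * real n - 2))"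
proof -
  have "x - 2 \<noteq> 0" "x * (x - 2 * real n - 2) \<noteq> 0"
    using assms odd_neq_even_real[of p "Suc n"] odd_neq_even_real[of p 1] by auto
  moreover have "gram_prod n (p - 1) * (x * (x - 2 * real n - 2)) = gram_prod n p * (x + 2 * real n) * (x - 2)"
    using gram_prod_shift[of n "p - 1"] assms by (simp add: of_nat_diff algebra_simps)
  ultimately show ?thesis
    by (simp add: frac_eq_eq)
qed

definition gram_formula :: "nat \<Rightarrow> nat \<Rightarrow> nat \<Rightarrow> real" where
  "gram_formula n p k = (-1) ^ k * gram_coeff n k * gram_prod n p / (2 * real p + 1)"

lemma gram_formula_eq_0: "n < k \<Longrightarrow> gram_formula n p k = 0"
  by (simp add: gram_formula_def gram_coeff_def)

lemma gram_formula_Suc_param: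
  fixes x :: real
  assumes "x = 2 * real p + 1"
  shows "gram_formula n (Suc p) k = gram_formula n p k * (x - 2 * real n) / (x + 2 * real n + 2)"
proof -
  have "2 * real (Suc p) + 1 = x + 2"
    using assms by simp
  then have "gram_formula n (Suc p) k = (-1) ^ k * gram_coeff n k * (gram_prod n (Suc p) / (x + 2))"
    unfolding gram_formula_def by simp
  also have "\<dots> = gram_formula n p k * (x - 2 * real n) / (x + 2 * real n + 2)"
    unfolding gram_prod_Suc_param[OF assms] gram_formula_def assms[symmetric] by simp
  finally show ?thesis .
qed

lemma gram_formula_pred_param:
  fixes x :: real
  assumes "x = 2 * real p + 1" and "0 < p"
  shows "gram_formula n (p - 1) k = gram_formula n p k * (x + 2 * real n) / (x - 2 * real n - 2)"
proof -
  have "2 * real (p - 1) + 1 = x - 2"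
    using assms by (simp add: of_nat_diff)
  then have "gram_formula n (p - 1) k = (-1) ^ k * gram_coeff n k * (gram_prod n (p - 1) / (x - 2))"
    unfolding gram_formula_def by simp
  also have "\<dots> = gram_formula n p k * (x + 2 * real n) / (x - 2 * real n - 2)"
    unfolding gram_prod_pred_param[OF assms] gram_formula_def assms(1)[symmetric] by simp
  finally show ?thesis .
qed

lemma gram_formula_Suc_level:
  fixes x a \<sigma> :: real
  assumes x: "x = 2 * real p + 1"
    and coeff: "2 * (real n + 1) * gram_coeff n j = a * gram_coeff (Suc n) k"
    and sign: "(-1) ^ j = \<sigma> * (-1) ^ k"
  shows "2 * (real n + 1) * (2 * real n + 1) * gram_formula n p j =
      \<sigma> * a * ((x - 2 * real n - 2) * (x + 2 * real n + 2) * gram_formula (Suc n) p k)"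
proof -
  define z w where "z = x - 2 * real n - 2" and "w = x + 2 * real n + 2"
  have "z \<noteq> 0" "w \<noteq> 0"
    using odd_neq_even_real[of p "Suc n"] by (auto simp: x z_def w_def add_pos_pos)
  then have "z * w * gram_formula (Suc n) p k = (2 * real n + 1) * ((-1) ^ k * gram_coeff (Suc n) k * gram_prod n p / x)"
    unfolding gram_formula_def gram_prod_Suc[OF x] x[symmetric] z_def[symmetric] w_def[symmetric] by simp
  moreover have "2 * (real n + 1) * (2 * real n + 1) * gram_formula n p j =
      (2 * real n + 1) * ((-1) ^ j * (2 * (real n + 1) * gram_coeff n j) * gram_prod n p / x)"
    unfolding gram_formula_def x[symmetric] by (simp add: ac_simps)
  ultimately show ?thesis
    unfolding coeff sign z_def[symmetric] w_def[symmetric] by (simp add: algebra_simps)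
qed

lemma gram_rational_identity:
  fixes x N K :: real
  assumes "x - 2 * N - 2 \<noteq> 0" and "x + 2 * N + 2 \<noteq> 0"
  shows "2 * (N + 1) * (2 * N + 1) * ((x + 2 * K) * (x - 2 * K)) / ((x - 2 * N - 2) * (x + 2 * N + 2)) =
    (N + 1 + K) * (N + 1 - K) * (x - 2 * N) / (x + 2 * N + 2)
    + (N + 1 - K) * (N - K) + (N + K) * (N + K + 1)
    + (N + 1 + K) * (N + 1 - K) * (x + 2 * N) / (x - 2 * N - 2)"
proof -
  define w z where "w = x + 2 * N + 2" and "z = x - 2 * N - 2"
  have "2 * (N + 1) * (2 * N + 1) * ((x + 2 * K) * (x - 2 * K)) =
      (N + 1 + K) * (N + 1 - K) * (z + 2) * z + ((N + 1 - K) * (N - K) + (N + K) * (N + K + 1)) * (z * w)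
      + (N + 1 + K) * (N + 1 - K) * (w - 2) * w"
    unfolding w_def z_def by (simp add: algebra_simps power2_eq_square)
  moreover have "z \<noteq> 0" "w \<noteq> 0"
    using assms by (simp_all add: w_def z_def)
  ultimately have "2 * (N + 1) * (2 * N + 1) * ((x + 2 * K) * (x - 2 * K)) / (z * w) =
      (N + 1 + K) * (N + 1 - K) * (z + 2) / w + (N + 1 - K) * (N - K) + (N + K) * (N + K + 1)
      + (N + 1 + K) * (N + 1 - K) * (w - 2) / z"
    by (simp add: field_simps)
  moreover have "x - 2 * N = z + 2" "x + 2 * N = w - 2"
    unfolding w_def z_def by simp_all
  ultimately show ?thesis
    unfolding w_def[symmetric] z_def[symmetric] by simp
qed

text \<open>For \<open>k = 0\<close> the term with parameter \<open>k - 1\<close> stands for \<open>\<integral>\<psi>\<^sub>p\<^sub>-\<^sub>1\<^sub>,\<^sub>n \<psi>\<^sub>p\<^sub>+\<^sub>1\<^sub>,\<^sub>n\<close>,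
  which is the integral with parameter \<open>1\<close>.\<close>

lemma gram_formula_recurrence:
  assumes "0 < p"
  shows "(2 * real p + 2 * real k + 1) * (2 * real p - 2 * real k + 1) * gram_formula (Suc n) p k =
    gram_formula n (Suc p) k - gram_formula n p (Suc k)
    - gram_formula n p (if k = 0 then 1 else k - 1) + gram_formula n (p - 1) k"
    (is "?L = ?R")
proof -
  define x N K where "x = 2 * real p + 1" and "N = real n" and "K = real k"
  define w z where "w = x + 2 * N + 2" and "z = x - 2 * N - 2"
  define D F where "D = 2 * (N + 1) * (2 * N + 1)" and "F = z * w * gram_formula (Suc n) p k"
  have "D \<noteq> 0" "z \<noteq> 0" "w \<noteq> 0"
    using odd_neq_even_real[of p "Suc n"] by (auto simp: D_def N_def x_def w_def z_def add_pos_pos)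
  have L0: "D * gram_formula n p k = (N + 1 + K) * (N + 1 - K) * F"
    using gram_formula_Suc_level[OF x_def gram_coeff_Suc[of n k], of 1]
    by (simp add: D_def F_def N_def K_def w_def z_def)
  have L1: "D * gram_formula n p (Suc k) = - ((N + 1 - K) * (N - K) * F)"
    using gram_formula_Suc_level[OF x_def gram_coeff_Suc_upper[of n k], of "-1"]
    by (simp add: D_def F_def N_def K_def w_def z_def)
  have sign: "(-1) ^ (if k = 0 then 1 else k - 1) = - 1 * (-1::real) ^ k"
    by (cases k) simp_all
  have L2: "D * gram_formula n p (if k = 0 then 1 else k - 1) = - ((N + K) * (N + K + 1) * F)"
    using gram_formula_Suc_level[OF x_def gram_coeff_Suc_lower[of n k] sign]
    by (simp add: D_def F_def N_def K_def w_def z_def)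
  note P1 = gram_formula_Suc_param[OF x_def, of n k, folded N_def, folded w_def]
  note P2 = gram_formula_pred_param[OF x_def assms, of n k, folded N_def, folded z_def]
  have "D * ?R = (D * gram_formula n p k) * (x - 2 * N) / w - D * gram_formula n p (Suc k)
      - D * gram_formula n p (if k = 0 then 1 else k - 1) + (D * gram_formula n p k) * (x + 2 * N) / z"
    unfolding P1 P2 by (simp add: algebra_simps)
  also have "\<dots> = F * ((N + 1 + K) * (N + 1 - K) * (x - 2 * N) / w
      + (N + 1 - K) * (N - K) + (N + K) * (N + K + 1) + (N + 1 + K) * (N + 1 - K) * (x + 2 * N) / z)"
    unfolding L0 L1 L2 by (simp add: algebra_simps)
  also have "\<dots> = F * (D * ((x + 2 * K) * (x - 2 * K)) / (z * w))"
    using gram_rational_identity[of x N K, folded w_def z_def D_def] \<open>z \<noteq> 0\<close> \<open>w \<noteq> 0\<close> by simp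
  also have "\<dots> = D * ((x + 2 * K) * (x - 2 * K)) * gram_formula (Suc n) p k"
    using \<open>z \<noteq> 0\<close> \<open>w \<noteq> 0\<close> by (simp add: F_def)
  also have "\<dots> = D * ?L"
    by (simp add: x_def K_def algebra_simps)
  finally show ?thesis
    using \<open>D \<noteq> 0\<close> by simp
qed

section \<open>The integrals of products of primitives\<close>

lemma poly_integral_legendre_prim_poly_Suc_interior:
  assumes IH: "\<And>p k. n \<le> p \<Longrightarrow> k \<le> p \<Longrightarrow>
      poly_integral (legendre_prim_poly (p + k) n * legendre_prim_poly (p - k) n) = gram_formula n p k"
    and "Suc n \<le> p" and "k < p"
  shows "poly_integral (legendre_prim_poly (p + k) (Suc n) * legendre_prim_poly (p - k) (Suc n)) =
           gram_formula (Suc n) p k"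
proof -
  define i j where "i = p + k - 1" and "j = p - k - 1"
  have ij: "p + k = Suc i" "p - k = Suc j" "Suc p - k = Suc (Suc j)" "p - Suc k = j"
    using assms by (simp_all add: i_def j_def)
  have "poly_integral (legendre_prim_poly (Suc (Suc i)) n * legendre_prim_poly (Suc (Suc j)) n) =
          gram_formula n (Suc p) k"
    using IH[of "Suc p" k] assms ij by simp
  moreover have "poly_integral (legendre_prim_poly (Suc (Suc i)) n * legendre_prim_poly j n) =
          gram_formula n p (Suc k)"
    using IH[of p "Suc k"] assms ij by simp
  moreover have "poly_integral (legendre_prim_poly i n * legendre_prim_poly (Suc (Suc j)) n) =
          gram_formula n p (if k = 0 then 1 else k - 1)"
  proof (cases k)
    case 0
    then show ?thesis
      using IH[of p 1] assms ij by (simp add: mult.commute)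
  next
    case (Suc m)
    with ij have "i = p + m" "Suc (Suc j) = p - m"
      by simp_all
    then show ?thesis
      using IH[of p m] assms Suc by simp
  qed
  moreover have "poly_integral (legendre_prim_poly i n * legendre_prim_poly j n) = gram_formula n (p - 1) k"
    using IH[of "p - 1" k] assms ij by simp
  moreover have "(2 * real i + 3) * (2 * real j + 3) = (2 * real p + 2 * real k + 1) * (2 * real p - 2 * real k + 1)"
    using assms by (simp add: i_def j_def of_nat_diff algebra_simps)
  ultimately have "(2 * real i + 3) * (2 * real j + 3) *
      poly_integral (legendre_prim_poly (Suc i) (Suc n) * legendre_prim_poly (Suc j) (Suc n)) =
      (2 * real i + 3) * (2 * real j + 3) * gram_formula (Suc n) p k"
    using poly_integral_legendre_prim_poly_Suc_Suc[of i j n] gram_formula_recurrence[of p k n] assms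
    by simp
  then show ?thesis
    unfolding ij by (simp add: add_pos_pos)
qed

lemma poly_integral_legendre_prim_poly_Suc_boundary:
  assumes IH: "\<And>p k. n \<le> p \<Longrightarrow> k \<le> p \<Longrightarrow>
      poly_integral (legendre_prim_poly (p + k) n * legendre_prim_poly (p - k) n) = gram_formula n p k"
    and "Suc n \<le> p"
  shows "poly_integral (legendre_prim_poly (p + p) (Suc n) * legendre_prim_poly 0 (Suc n)) =
           gram_formula (Suc n) p p"
proof -
  define i where "i = 2 * p - 1"
  have i: "p + p = Suc i" "real i = 2 * real p - 1"
    using assms by (simp_all add: i_def of_nat_diff)
  have Z: "poly_integral (legendre_prim_poly (Suc (Suc i)) n * legendre_prim_poly 0 n) = 0"
    "poly_integral (legendre_prim_poly i n * legendre_prim_poly 0 n) = 0"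
    using degree_legendre_prim_poly_0_le[of n] assms
    by (auto simp: i_def intro!: poly_integral_legendre_prim_poly_mult_eq_0)
  have I1: "poly_integral (legendre_prim_poly (Suc (Suc i)) n * legendre_prim_poly 1 n) =
          gram_formula n (Suc p) p"
    using IH[of "Suc p" p] assms i by simp
  have I2: "poly_integral (legendre_prim_poly i n * legendre_prim_poly 1 n) = gram_formula n p (p - 1)"
    using IH[of p "p - 1"] assms i by (simp add: i_def)
  have "gram_formula n p (Suc p) = 0" "gram_formula n (p - 1) p = 0"
    using assms by (simp_all add: gram_formula_eq_0)
  then have R: "(2 * real i + 3) * gram_formula (Suc n) p p = gram_formula n (Suc p) p - gram_formula n p (p - 1)"
    unfolding i(2) using gram_formula_recurrence[of p p n] assms(2) by (simp add: algebra_simps)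
  have "(2 * real i + 3) * poly_integral (legendre_prim_poly (Suc i) (Suc n) * legendre_prim_poly 0 (Suc n)) =
      (2 * real i + 3) * gram_formula (Suc n) p p"
    unfolding poly_integral_legendre_prim_poly_Suc_0 Z I1 I2 R by simp
  then show ?thesis
    unfolding i(1) by (simp add: add_pos_pos)
qed

lemma poly_integral_legendre_prim_poly_eq_gram_formula:
  "n \<le> p \<Longrightarrow> k \<le> p \<Longrightarrow>
     poly_integral (legendre_prim_poly (p + k) n * legendre_prim_poly (p - k) n) = gram_formula n p k"
proof (induction n arbitrary: p k)
  case 0
  show ?case
  proof (cases "k = 0")
    case True
    then show ?thesis
      by (simp add: poly_integral_legendre_poly_square gram_formula_def gram_coeff_def gram_prod_def)
  next
    case False
    then show ?thesis
      using legendre_poly_orthogonal[of "p + k" "p - k"] by (simp add: gram_formula_eq_0)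
  qed
next
  case (Suc n)
  consider "k < p" | "k = p"
    using Suc.prems by linarith
  then show ?case
  proof cases
    case 1
    then show ?thesis
      using Suc by (intro poly_integral_legendre_prim_poly_Suc_interior) auto
  next
    case 2
    then show ?thesis
      using Suc poly_integral_legendre_prim_poly_Suc_boundary[of n p] by simp
  qed
qed

theorem proposition3:
  fixes n p k :: nat
  assumes "p \<ge> n" and "k \<le> p"
  shows "integral {-1..1} (\<lambda>x. legendre_prim (p + k) n x * legendre_prim (p - k) n x) =
    (if k \<le> n then
       (-1) ^ k * (2 ^ (n + 1) * fact n / (fact (n + k) * fact (n - k)))
         * (1 / (2 * real p + 1))
         * (\<Prod>i = 1..n. (2 * real i - 1) / ((2 * real p + 1)^2 - 4 * (real i)^2))
     else 0)"
proof -
  have "integral {-1..1} (\<lambda>x. legendre_prim (p + k) n x * legendre_prim (p - k) n x) =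
        poly_integral (legendre_prim_poly (p + k) n * legendre_prim_poly (p - k) n)"
    unfolding poly_integral_def by (rule integral_cong) (simp add: legendre_prim_eq_poly)
  also have "\<dots> = gram_formula n p k"
    using assms by (rule poly_integral_legendre_prim_poly_eq_gram_formula)
  finally show ?thesis
    by (simp add: gram_formula_def gram_coeff_def gram_prod_def)
qed

end
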